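(* Let $L_1,L_2$ be disjoint first-order languages without function symbols, and let $\mathcal M_k$ be an $L_k$-structure for $k=1,2$. Then the standard simple product of $\mathcal M_1$ and $\mathcal M_2$ is a simple product of $\mathcal M_1$ and $\mathcal M_2$.
   Context: Let $M_k$ be the universe of $\mathcal M_k$ and $\pi_k:M_1\times M_2\to M_k$ the projections. For $A\subseteq M_1^n$ and $B\subseteq M_2^n$ put $A*B=\{((a_1,b_1),\ldots,(a_n,b_n))\in(M_1\times M_2)^n:(a_1,\ldots,a_n)\in A,(b_1,\ldots,b_n)\in B\}$. A structure $\mathcal N$ (in any language) is a simple product of $\mathcal M_1$ and $\mathcal M_2$ if its universe is $M_1\times M_2$ and every $\mathcal N$-definable (with parameters) subset of $(M_1\times M_2)^n$ is a Boolean combination of finitely many sets of the form $A*M_2^n$ with $A$ an $\mathcal M_1$-definable subset of $M_1^n$ and $M_1^n*B$ with $B$ an $\mathcal M_2$-definable subset of $M_2^n$. The language $L_{\mathrm{sim}}$ has constant symbols $C_{(c_1,c_2)}$ for each pair of constants $c_1\in L_1$, $c_2\in L_2$, the predicate symbols of $L_1$ and of $L_2$, and two binary predicates $\sim_1,\sim_2$. The standard simple product of $\mathcal M_1,\mathcal M_2$ is the $L_{\mathrm{sim}}$-structure with universe $M_1\times M_2$, where $C_{(c_1,c_2)}$ is interpreted as $(c_1^{\mathcal M_1},c_2^{\mathcal M_2})$, $x\sim_k y$ iff $\pi_k(x)=\pi_k(y)$, and for an $n$-ary predicate $R\in L_k$, $R(\bar c)$ holds iff $\mathcal M_k\models R(\pi_k(\bar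 c))$ ($\pi_k$ applied coordinatewise). *)

theory Defs
  imports Main
begin

record ('c, 'r) lang =
  lconsts :: "'c set"
  lrels :: "'r set"
  larity :: "'r \<Rightarrow> nat"

record ('a, 'c, 'r) struc =
  univ :: "'a set"
  cint :: "'c \<Rightarrow> 'a"
  rint :: "'r \<Rightarrow> 'a list \<Rightarrow> bool"

definition is_structure :: "('c, 'r) lang \<Rightarrow> ('a, 'c, 'r) struc \<Rightarrow> bool" where
  "is_structure L M \<longleftrightarrow> univ M \<noteq> {}
     \<and> (\<forall>c \<in> lconsts L. cint M c \<in> univ M)
     \<and> (\<forall>r \<in> lrels L. \<forall>xs. rint M r xs \<longrightarrow> length xs = larity L r \<and> set xs \<subseteq> univ M)"

datatype 'c trm = Var nat | Cst 'c

datatype ('c, 'r) fm =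
    Eq "'c trm" "'c trm"
  | Rel 'r "'c trm list"
  | Neg "('c, 'r) fm"
  | Conj "('c, 'r) fm" "('c, 'r) fm"
  | Ex nat "('c, 'r) fm"

fun wf_trm :: "('c, 'r) lang \<Rightarrow> 'c trm \<Rightarrow> bool" where
  "wf_trm L (Var i) = True"
| "wf_trm L (Cst c) = (c \<in> lconsts L)"

fun wf_fm :: "('c, 'r) lang \<Rightarrow> ('c, 'r) fm \<Rightarrow> bool" where
  "wf_fm L (Eq s t) = (wf_trm L s \<and> wf_trm L t)"
| "wf_fm L (Rel r ts) = (r \<in> lrels L \<and> length ts = larity L r \<and> (\<forall>t \<in> set ts. wf_trm L t))"
| "wf_fm L (Neg \<phi>) = wf_fm L \<phi>"
| "wf_fm L (Conj \<phi> \<psi>) = (wf_fm L \<phi> \<and> wf_fm L \<psi>)"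
| "wf_fm L (Ex x \<phi>) = wf_fm L \<phi>"

fun tval :: "('a, 'c, 'r) struc \<Rightarrow> (nat \<Rightarrow> 'a) \<Rightarrow> 'c trm \<Rightarrow> 'a" where
  "tval M e (Var i) = e i"
| "tval M e (Cst c) = cint M c"

fun sat :: "('a, 'c, 'r) struc \<Rightarrow> (nat \<Rightarrow> 'a) \<Rightarrow> ('c, 'r) fm \<Rightarrow> bool" where
  "sat M e (Eq s t) = (tval M e s = tval M e t)"
| "sat M e (Rel r ts) = rint M r (map (tval M e) ts)"
| "sat M e (Neg \<phi>) = (\<not> sat M e \<phi>)"
| "sat M e (Conj \<phi> \<psi>) = (sat M e \<phi> \<and> sat M e \<psi>)"
| "sat M e (Ex x \<phi>) = (\<exists>a \<in> univ M. sat M (e(x := a)) \<phi>)"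

definition tuples :: "nat \<Rightarrow> 'a set \<Rightarrow> 'a list set" where
  "tuples n A = {xs. length xs = n \<and> set xs \<subseteq> A}"

text \<open>Definable (with parameters) subsets of M^n: variables 0..n-1 are the tuple,
  the remaining variables are assigned parameters from the universe.\<close>
definition definable :: "('c, 'r) lang \<Rightarrow> ('a, 'c, 'r) struc \<Rightarrow> nat \<Rightarrow> 'a list set \<Rightarrow> bool" where
  "definable L M n S \<longleftrightarrow> (\<exists>\<phi> p. wf_fm L \<phi> \<and> (\<forall>i. p i \<in> univ M) \<and>
     S = {xs \<in> tuples n (univ M). sat M (\<lambda>i. if i < n then xs ! i else p i) \<phi>})"

definition star :: "'a list set \<Rightarrow> 'b list set \<Rightarrow> ('a \<times> 'b) list set" where
  "star A B = {zs. map fst zs \<in> A \<and> map snd zs \<in> B}"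

inductive_set bool_comb :: "'a set \<Rightarrow> 'a set set \<Rightarrow> 'a set set" for U F where
  base: "S \<in> F \<Longrightarrow> S \<in> bool_comb U F"
| top: "U \<in> bool_comb U F"
| compl: "S \<in> bool_comb U F \<Longrightarrow> U - S \<in> bool_comb U F"
| inter: "S \<in> bool_comb U F \<Longrightarrow> T \<in> bool_comb U F \<Longrightarrow> S \<inter> T \<in> bool_comb U F"

definition simple_gens ::
  "('c1, 'r1) lang \<Rightarrow> ('a1, 'c1, 'r1) struc \<Rightarrow> ('c2, 'r2) lang \<Rightarrow> ('a2, 'c2, 'r2) struc
   \<Rightarrow> nat \<Rightarrow> ('a1 \<times> 'a2) list set set" where
  "simple_gens L1 M1 L2 M2 n =
     {star A (tuples n (univ M2)) | A. definable L1 M1 n A}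
   \<union> {star (tuples n (univ M1)) B | B. definable L2 M2 n B}"

definition is_simple_product ::
  "('c, 'r) lang \<Rightarrow> ('a1 \<times> 'a2, 'c, 'r) struc \<Rightarrow>
   ('c1, 'r1) lang \<Rightarrow> ('a1, 'c1, 'r1) struc \<Rightarrow> ('c2, 'r2) lang \<Rightarrow> ('a2, 'c2, 'r2) struc \<Rightarrow> bool" where
  "is_simple_product L N L1 M1 L2 M2 \<longleftrightarrow>
     univ N = univ M1 \<times> univ M2 \<and>
     (\<forall>n S. definable L N n S \<longrightarrow>
        (\<exists>F. finite F \<and> F \<subseteq> simple_gens L1 M1 L2 M2 n \<and>
             S \<in> bool_comb (tuples n (univ N)) F))"

text \<open>Predicate symbols of L_sim: those of L1, those of L2 (kept disjoint by tagging), and two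
  binary predicates for the equivalence relations.\<close>
datatype ('r1, 'r2) simrel = R1 'r1 | R2 'r2 | Sim1 | Sim2

definition L_sim :: "('c1, 'r1) lang \<Rightarrow> ('c2, 'r2) lang \<Rightarrow> ('c1 \<times> 'c2, ('r1, 'r2) simrel) lang" where
  "L_sim L1 L2 = \<lparr> lconsts = lconsts L1 \<times> lconsts L2,
     lrels = R1 ` lrels L1 \<union> R2 ` lrels L2 \<union> {Sim1, Sim2},
     larity = (\<lambda>r. case r of R1 r1 \<Rightarrow> larity L1 r1 | R2 r2 \<Rightarrow> larity L2 r2 | Sim1 \<Rightarrow> 2 | Sim2 \<Rightarrow> 2) \<rparr>"

definition std_simple_product ::
  "('a1, 'c1, 'r1) struc \<Rightarrow> ('a2, 'c2, 'r2) struc \<Rightarrow> ('a1 \<times> 'a2, 'c1 \<times> 'c2, ('r1, 'r2) simrel) struc" where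
  "std_simple_product M1 M2 = \<lparr> univ = univ M1 \<times> univ M2,
     cint = (\<lambda>(c1, c2). (cint M1 c1, cint M2 c2)),
     rint = (\<lambda>r xs. set xs \<subseteq> univ M1 \<times> univ M2 \<and>
       (case r of
          R1 r1 \<Rightarrow> rint M1 r1 (map fst xs)
        | R2 r2 \<Rightarrow> rint M2 r2 (map snd xs)
        | Sim1 \<Rightarrow> length xs = 2 \<and> fst (xs ! 0) = fst (xs ! 1)
        | Sim2 \<Rightarrow> length xs = 2 \<and> snd (xs ! 0) = snd (xs ! 1))) \<rparr>"

end

theory Submission
  imports Defs
begin

(* Every L_sim-formula is equivalent, on assignments into M1 x M2, to a finite disjunction of
   conjunctions phi(pi_1 x) /\ psi(pi_2 x) with phi an L1-formula and psi an L2-formula.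
   Atomic formulas split coordinatewise (an equation between pairs is a pair of equations,
   R1, R2, ~1, ~2 only look at one coordinate); such normal forms are closed under conjunction
   by distributivity and under negation by De Morgan; and an existential quantifier over a pair
   distributes over the disjunction and splits into independent quantifiers in the two factors.
   Fixing the parameters, each disjunct defines a set A * M2^n \<inter> M1^n * B. *)

lemma L_sim_simps [simp]:
  "lconsts (L_sim L1 L2) = lconsts L1 \<times> lconsts L2"
  "lrels (L_sim L1 L2) = R1 ` lrels L1 \<union> R2 ` lrels L2 \<union> {Sim1, Sim2}"
  "larity (L_sim L1 L2) (R1 r1) = larity L1 r1"
  "larity (L_sim L1 L2) (R2 r2) = larity L2 r2"
  "larity (L_sim L1 L2) Sim1 = 2"
  "larity (L_sim L1 L2) Sim2 = 2"
  by (simp_all add: L_sim_def)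

lemma std_simple_product_simps [simp]:
  "univ (std_simple_product M1 M2) = univ M1 \<times> univ M2"
  "cint (std_simple_product M1 M2) c = (cint M1 (fst c), cint M2 (snd c))"
  "rint (std_simple_product M1 M2) (R1 r1) xs \<longleftrightarrow>
     set xs \<subseteq> univ M1 \<times> univ M2 \<and> rint M1 r1 (map fst xs)"
  "rint (std_simple_product M1 M2) (R2 r2) xs \<longleftrightarrow>
     set xs \<subseteq> univ M1 \<times> univ M2 \<and> rint M2 r2 (map snd xs)"
  "rint (std_simple_product M1 M2) Sim1 xs \<longleftrightarrow>
     set xs \<subseteq> univ M1 \<times> univ M2 \<and> length xs = 2 \<and> fst (xs ! 0) = fst (xs ! 1)"
  "rint (std_simple_product M1 M2) Sim2 xs \<longleftrightarrow>
     set xs \<subseteq> univ M1 \<times> univ M2 \<and> length xs = 2 \<and> snd (xs ! 0) = snd (xs ! 1)"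
  by (simp_all add: std_simple_product_def split: prod.split)

definition fm_true :: "('c, 'r) fm" where
  "fm_true = Eq (Var 0) (Var 0)"

lemma sat_fm_true [simp]: "sat M e fm_true"
  by (simp add: fm_true_def)

lemma wf_fm_true [simp]: "wf_fm L fm_true"
  by (simp add: fm_true_def)

(* pdnf: product disjunctive normal form, read by sat_pdnf as a disjunction over its pairs. *)
type_synonym ('c1, 'r1, 'c2, 'r2) pdnf = "(('c1, 'r1) fm \<times> ('c2, 'r2) fm) list"

definition sat_pdnf ::
  "('a1, 'c1, 'r1) struc \<Rightarrow> ('a2, 'c2, 'r2) struc \<Rightarrow> ('c1, 'r1, 'c2, 'r2) pdnf
   \<Rightarrow> (nat \<Rightarrow> 'a1) \<Rightarrow> (nat \<Rightarrow> 'a2) \<Rightarrow> bool" where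
  "sat_pdnf M1 M2 D e1 e2 \<longleftrightarrow> (\<exists>(\<phi>, \<psi>) \<in> set D. sat M1 e1 \<phi> \<and> sat M2 e2 \<psi>)"

definition wf_pdnf :: "('c1, 'r1) lang \<Rightarrow> ('c2, 'r2) lang \<Rightarrow> ('c1, 'r1, 'c2, 'r2) pdnf \<Rightarrow> bool" where
  "wf_pdnf L1 L2 D \<longleftrightarrow> (\<forall>(\<phi>, \<psi>) \<in> set D. wf_fm L1 \<phi> \<and> wf_fm L2 \<psi>)"

definition pdnf_conj ::
  "('c1, 'r1, 'c2, 'r2) pdnf \<Rightarrow> ('c1, 'r1, 'c2, 'r2) pdnf \<Rightarrow> ('c1, 'r1, 'c2, 'r2) pdnf" where
  "pdnf_conj D E = [(Conj \<phi> \<phi>', Conj \<psi> \<psi>'). (\<phi>, \<psi>) \<leftarrow> D, (\<phi>', \<psi>') \<leftarrow> E]"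

fun pdnf_neg :: "('c1, 'r1, 'c2, 'r2) pdnf \<Rightarrow> ('c1, 'r1, 'c2, 'r2) pdnf" where
  "pdnf_neg [] = [(fm_true, fm_true)]"
| "pdnf_neg ((\<phi>, \<psi>) # D) = pdnf_conj [(Neg \<phi>, fm_true), (fm_true, Neg \<psi>)] (pdnf_neg D)"

definition pdnf_ex :: "nat \<Rightarrow> ('c1, 'r1, 'c2, 'r2) pdnf \<Rightarrow> ('c1, 'r1, 'c2, 'r2) pdnf" where
  "pdnf_ex x D = [(Ex x \<phi>, Ex x \<psi>). (\<phi>, \<psi>) \<leftarrow> D]"

lemma sat_pdnf_conj:
  "sat_pdnf M1 M2 (pdnf_conj D E) e1 e2 \<longleftrightarrow> sat_pdnf M1 M2 D e1 e2 \<and> sat_pdnf M1 M2 E e1 e2"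
  by (force simp: sat_pdnf_def pdnf_conj_def)

lemma sat_pdnf_neg: "sat_pdnf M1 M2 (pdnf_neg D) e1 e2 \<longleftrightarrow> \<not> sat_pdnf M1 M2 D e1 e2"
  by (induction D rule: pdnf_neg.induct) (auto simp: sat_pdnf_conj, auto simp: sat_pdnf_def)

lemma sat_pdnf_ex:
  "sat_pdnf M1 M2 (pdnf_ex x D) e1 e2 \<longleftrightarrow>
     (\<exists>a \<in> univ M1. \<exists>b \<in> univ M2. sat_pdnf M1 M2 D (e1(x := a)) (e2(x := b)))"
  unfolding sat_pdnf_def pdnf_ex_def by (auto split: prod.splits) blast+

lemma wf_pdnf_conj: "wf_pdnf L1 L2 D \<Longrightarrow> wf_pdnf L1 L2 E \<Longrightarrow> wf_pdnf L1 L2 (pdnf_conj D E)"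
  by (auto simp: wf_pdnf_def pdnf_conj_def)

lemma wf_pdnf_neg: "wf_pdnf L1 L2 D \<Longrightarrow> wf_pdnf L1 L2 (pdnf_neg D)"
proof (induction D rule: pdnf_neg.induct)
  case (2 \<phi> \<psi> D)
  then have "wf_pdnf L1 L2 [(Neg \<phi>, fm_true), (fm_true, Neg \<psi>)]" "wf_pdnf L1 L2 D"
    by (simp_all add: wf_pdnf_def)
  with 2 show ?case by (simp add: wf_pdnf_conj)
qed (simp add: wf_pdnf_def)

lemma wf_pdnf_ex: "wf_pdnf L1 L2 D \<Longrightarrow> wf_pdnf L1 L2 (pdnf_ex x D)"
  by (auto simp: wf_pdnf_def pdnf_ex_def)

(* For ill-formed Sim-atoms the indices 0 and 1 are junk; wf_fm rules these out. *)
fun pdnf_of :: "('c1 \<times> 'c2, ('r1, 'r2) simrel) fm \<Rightarrow> ('c1, 'r1, 'c2, 'r2) pdnf" where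
  "pdnf_of (Eq s t) = [(Eq (map_trm fst s) (map_trm fst t), Eq (map_trm snd s) (map_trm snd t))]"
| "pdnf_of (Rel (R1 r) ts) = [(Rel r (map (map_trm fst) ts), fm_true)]"
| "pdnf_of (Rel (R2 r) ts) = [(fm_true, Rel r (map (map_trm snd) ts))]"
| "pdnf_of (Rel Sim1 ts) = [(Eq (map_trm fst (ts ! 0)) (map_trm fst (ts ! 1)), fm_true)]"
| "pdnf_of (Rel Sim2 ts) = [(fm_true, Eq (map_trm snd (ts ! 0)) (map_trm snd (ts ! 1)))]"
| "pdnf_of (Neg \<phi>) = pdnf_neg (pdnf_of \<phi>)"
| "pdnf_of (Conj \<phi> \<psi>) = pdnf_conj (pdnf_of \<phi>) (pdnf_of \<psi>)"
| "pdnf_of (Ex x \<phi>) = pdnf_ex x (pdnf_of \<phi>)"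

lemma wf_trm_map_fst: "wf_trm (L_sim L1 L2) t \<Longrightarrow> wf_trm L1 (map_trm fst t)"
  by (cases t) auto

lemma wf_trm_map_snd: "wf_trm (L_sim L1 L2) t \<Longrightarrow> wf_trm L2 (map_trm snd t)"
  by (cases t) auto

lemma wf_pdnf_of: "wf_fm (L_sim L1 L2) \<phi> \<Longrightarrow> wf_pdnf L1 L2 (pdnf_of \<phi>)"
proof (induction \<phi> rule: pdnf_of.induct)
  case (4 ts)
  then have "length ts = 2" by simp
  with 4 show ?case by (auto simp: wf_pdnf_def intro!: wf_trm_map_fst)
next
  case (5 ts)
  then have "length ts = 2" by simp
  with 5 show ?case by (auto simp: wf_pdnf_def intro!: wf_trm_map_snd)
next
  case (6 \<phi>)
  then show ?case by (simp add: wf_pdnf_neg)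
next
  case (7 \<phi> \<psi>)
  then show ?case by (simp add: wf_pdnf_conj)
next
  case (8 x \<phi>)
  then show ?case by (simp add: wf_pdnf_ex)
qed (auto simp: wf_pdnf_def intro: wf_trm_map_fst wf_trm_map_snd)

lemma fst_tval_std_simple_product:
  "fst (tval (std_simple_product M1 M2) e t) = tval M1 (fst \<circ> e) (map_trm fst t)"
  by (cases t) auto

lemma snd_tval_std_simple_product:
  "snd (tval (std_simple_product M1 M2) e t) = tval M2 (snd \<circ> e) (map_trm snd t)"
  by (cases t) auto

lemma tvals_std_simple_product_in_univ:
  assumes "is_structure L1 M1" "is_structure L2 M2" "\<forall>t \<in> set ts. wf_trm (L_sim L1 L2) t"
    and "\<forall>i. e i \<in> univ M1 \<times> univ M2"
  shows "set (map (tval (std_simple_product M1 M2) e) ts) \<subseteq> univ M1 \<times> univ M2"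
proof -
  have "tval (std_simple_product M1 M2) e t \<in> univ M1 \<times> univ M2" if "t \<in> set ts" for t
    using assms that by (cases t) (auto simp: is_structure_def)
  then show ?thesis
    by (simp only: set_map image_subset_iff) blast
qed

lemma sat_std_simple_product_iff_sat_pdnf:
  assumes "is_structure L1 M1" "is_structure L2 M2" "wf_fm (L_sim L1 L2) \<phi>"
    and "\<forall>i. e i \<in> univ M1 \<times> univ M2"
  shows "sat (std_simple_product M1 M2) e \<phi> \<longleftrightarrow> sat_pdnf M1 M2 (pdnf_of \<phi>) (fst \<circ> e) (snd \<circ> e)"
  using assms(3,4)
proof (induction \<phi> arbitrary: e rule: pdnf_of.induct)
  case (6 \<phi>)
  then show ?case by (simp add: sat_pdnf_neg)
next
  case (7 \<phi> \<psi>)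
  then show ?case by (simp add: sat_pdnf_conj)
next
  case (8 x \<phi>)
  have IH: "sat (std_simple_product M1 M2) (e(x := (a, b))) \<phi> \<longleftrightarrow>
      sat_pdnf M1 M2 (pdnf_of \<phi>) ((fst \<circ> e)(x := a)) ((snd \<circ> e)(x := b))"
    if "a \<in> univ M1" "b \<in> univ M2" for a b
  proof -
    from 8 that have "wf_fm (L_sim L1 L2) \<phi>" "\<forall>i. (e(x := (a, b))) i \<in> univ M1 \<times> univ M2"
      by simp_all
    from "8.IH"[OF this] show ?thesis
      by (simp only: fun_upd_comp fst_conv snd_conv)
  qed
  have "sat (std_simple_product M1 M2) e (Ex x \<phi>) \<longleftrightarrow>
      (\<exists>a \<in> univ M1. \<exists>b \<in> univ M2. sat (std_simple_product M1 M2) (e(x := (a, b))) \<phi>)"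
    by simp
  also have "\<dots> \<longleftrightarrow> (\<exists>a \<in> univ M1. \<exists>b \<in> univ M2.
      sat_pdnf M1 M2 (pdnf_of \<phi>) ((fst \<circ> e)(x := a)) ((snd \<circ> e)(x := b)))"
    using IH by blast
  also have "\<dots> \<longleftrightarrow> sat_pdnf M1 M2 (pdnf_of (Ex x \<phi>)) (fst \<circ> e) (snd \<circ> e)"
    by (simp add: sat_pdnf_ex)
  finally show ?case .
qed (use tvals_std_simple_product_in_univ[OF assms(1,2)] in
      \<open>simp_all add: sat_pdnf_def fst_tval_std_simple_product snd_tval_std_simple_product
        prod_eq_iff comp_def del: set_map\<close>)

definition defined_set ::
  "('a, 'c, 'r) struc \<Rightarrow> nat \<Rightarrow> (nat \<Rightarrow> 'a) \<Rightarrow> ('c, 'r) fm \<Rightarrow> 'a list set" where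
  "defined_set M n p \<phi> = {xs \<in> tuples n (univ M). sat M (\<lambda>i. if i < n then xs ! i else p i) \<phi>}"

lemma definable_iff_defined_set:
  "definable L M n S \<longleftrightarrow> (\<exists>\<phi> p. wf_fm L \<phi> \<and> (\<forall>i. p i \<in> univ M) \<and> S = defined_set M n p \<phi>)"
  by (simp add: definable_def defined_set_def)

lemma definable_defined_set:
  "wf_fm L \<phi> \<Longrightarrow> \<forall>i. p i \<in> univ M \<Longrightarrow> definable L M n (defined_set M n p \<phi>)"
  unfolding definable_iff_defined_set by blast

lemma definable_subset_tuples: "definable L M n S \<Longrightarrow> S \<subseteq> tuples n (univ M)"
  by (auto simp: definable_def)

lemma tuples_Times_iff:
  "zs \<in> tuples n (A \<times> B) \<longleftrightarrow> map fst zs \<in> tuples n A \<and> map snd zs \<in> tuples n B"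
  by (auto simp: tuples_def)

lemma star_subset_tuples:
  "A \<subseteq> tuples n U1 \<Longrightarrow> B \<subseteq> tuples n U2 \<Longrightarrow> star A B \<subseteq> tuples n (U1 \<times> U2)"
  by (auto simp: star_def tuples_Times_iff)

lemma defined_set_std_simple_product:
  assumes "is_structure L1 M1" "is_structure L2 M2" "wf_fm (L_sim L1 L2) \<phi>"
    and "\<forall>i. p i \<in> univ M1 \<times> univ M2"
  shows "defined_set (std_simple_product M1 M2) n p \<phi> =
    (\<Union>\<psi> \<in> set (pdnf_of \<phi>).
       star (defined_set M1 n (fst \<circ> p) (fst \<psi>)) (tuples n (univ M2))
       \<inter> star (tuples n (univ M1)) (defined_set M2 n (snd \<circ> p) (snd \<psi>)))"
    (is "_ = ?rhs")
proof (rule set_eqI)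
  fix zs
  let ?e = "\<lambda>i. if i < n then zs ! i else p i"
  show "zs \<in> defined_set (std_simple_product M1 M2) n p \<phi> \<longleftrightarrow> zs \<in> ?rhs"
  proof (cases "zs \<in> tuples n (univ M1 \<times> univ M2)")
    case True
    then have "length zs = n" "\<forall>i. ?e i \<in> univ M1 \<times> univ M2"
      using assms(4) by (auto simp: tuples_def)
    moreover have "fst \<circ> ?e = (\<lambda>i. if i < n then map fst zs ! i else (fst \<circ> p) i)"
      and "snd \<circ> ?e = (\<lambda>i. if i < n then map snd zs ! i else (snd \<circ> p) i)"
      using \<open>length zs = n\<close> by auto
    ultimately show ?thesis
      using True sat_std_simple_product_iff_sat_pdnf[OF assms(1-3), of ?e]
      by (auto simp: defined_set_def star_def sat_pdnf_def tuples_Times_iff split_beta)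
  qed (auto simp: defined_set_def star_def tuples_Times_iff)
qed

lemma bool_comb_empty: "{} \<in> bool_comb U F"
  using bool_comb.compl[OF bool_comb.top] by simp

lemma bool_comb_Un:
  assumes "S \<in> bool_comb U F" "T \<in> bool_comb U F" "S \<subseteq> U" "T \<subseteq> U"
  shows "S \<union> T \<in> bool_comb U F"
proof -
  have "U - ((U - S) \<inter> (U - T)) \<in> bool_comb U F"
    using assms(1,2) by (intro bool_comb.compl bool_comb.inter)
  moreover have "U - ((U - S) \<inter> (U - T)) = S \<union> T"
    using assms(3,4) by blast
  ultimately show ?thesis by simp
qed

lemma bool_comb_Union:
  "finite \<S> \<Longrightarrow> \<S> \<subseteq> bool_comb U F \<Longrightarrow> (\<And>S. S \<in> \<S> \<Longrightarrow> S \<subseteq> U) \<Longrightarrow> \<Union>\<S> \<in> bool_comb U F"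
  by (induction \<S> rule: finite_induct) (auto intro: bool_comb_empty bool_comb_Un)

lemma Union_rectangles_in_bool_comb_simple_gens:
  assumes "finite I"
    and "\<And>i. i \<in> I \<Longrightarrow> definable L1 M1 n (A i)" "\<And>i. i \<in> I \<Longrightarrow> definable L2 M2 n (B i)"
  shows "\<exists>F. finite F \<and> F \<subseteq> simple_gens L1 M1 L2 M2 n \<and>
    (\<Union>i \<in> I. star (A i) (tuples n (univ M2)) \<inter> star (tuples n (univ M1)) (B i))
      \<in> bool_comb (tuples n (univ M1 \<times> univ M2)) F"
proof (intro exI conjI)
  let ?F = "(\<lambda>i. star (A i) (tuples n (univ M2))) ` I \<union> (\<lambda>i. star (tuples n (univ M1)) (B i)) ` I"
  show "finite ?F"
    using assms(1) by simp
  show "?F \<subseteq> simple_gens L1 M1 L2 M2 n"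
    using assms(2,3) by (auto simp: simple_gens_def)
  have "A i \<subseteq> tuples n (univ M1)" "B i \<subseteq> tuples n (univ M2)" if "i \<in> I" for i
    using that assms(2,3) by (meson definable_subset_tuples)+
  then have "star (A i) (tuples n (univ M2)) \<subseteq> tuples n (univ M1 \<times> univ M2)"
    and "star (tuples n (univ M1)) (B i) \<subseteq> tuples n (univ M1 \<times> univ M2)" if "i \<in> I" for i
    using that by (simp_all add: star_subset_tuples)
  then show "(\<Union>i \<in> I. star (A i) (tuples n (univ M2)) \<inter> star (tuples n (univ M1)) (B i))
      \<in> bool_comb (tuples n (univ M1 \<times> univ M2)) ?F"
    using assms(1) by (intro bool_comb_Union) (auto intro: bool_comb.base bool_comb.inter)
qed

theorem corollary2p10:
  fixes L1 :: "('c1, 'r1) lang" and M1 :: "('a1, 'c1, 'r1) struc"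
    and L2 :: "('c2, 'r2) lang" and M2 :: "('a2, 'c2, 'r2) struc"
  assumes "is_structure L1 M1" and "is_structure L2 M2"
  shows "is_simple_product (L_sim L1 L2) (std_simple_product M1 M2) L1 M1 L2 M2"
  unfolding is_simple_product_def
proof (intro conjI allI impI)
  show "univ (std_simple_product M1 M2) = univ M1 \<times> univ M2"
    by simp
  fix n S
  assume "definable (L_sim L1 L2) (std_simple_product M1 M2) n S"
  then obtain \<phi> p where \<phi>: "wf_fm (L_sim L1 L2) \<phi>" and p: "\<forall>i. p i \<in> univ M1 \<times> univ M2"
    and S: "S = defined_set (std_simple_product M1 M2) n p \<phi>"
    by (auto simp: definable_iff_defined_set)
  have "\<forall>i. (fst \<circ> p) i \<in> univ M1" "\<forall>i. (snd \<circ> p) i \<in> univ M2"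
    using p by (simp_all add: mem_Times_iff)
  with wf_pdnf_of[OF \<phi>]
  have "definable L1 M1 n (defined_set M1 n (fst \<circ> p) (fst \<psi>))"
    and "definable L2 M2 n (defined_set M2 n (snd \<circ> p) (snd \<psi>))" if "\<psi> \<in> set (pdnf_of \<phi>)" for \<psi>
    using that by (auto simp: wf_pdnf_def intro!: definable_defined_set)
  from Union_rectangles_in_bool_comb_simple_gens[OF finite_set this]
  show "\<exists>F. finite F \<and> F \<subseteq> simple_gens L1 M1 L2 M2 n \<and>
      S \<in> bool_comb (tuples n (univ (std_simple_product M1 M2))) F"
    unfolding S defined_set_std_simple_product[OF assms \<phi> p] by simp
qed

end
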